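(* Let $N\ge 1$, let $z_1,\dots,z_N\in\mathbb{C}^*$ and $n_1,\dots,n_N\in\mathbb{C}$. Then the assignment \[ X\mapsto \sum_{i=1}^N z_1^{-1}\cdots z_{i-1}^{-1}\,z_{i+1}\cdots z_N\,a_i,\qquad Y\mapsto \sum_{i=1}^N z_1^{-1}\cdots z_{i-1}^{-1}\,(z_i^2-z_i^{-2})\,z_{i+1}\cdots z_N\,b_i, \] \[ t\mapsto z_1\cdots z_N,\qquad G\mapsto \sum_{i=1}^N (n_i+a_ib_i) \] defines a unique (super)algebra homomorphism $\Phi_{\mathbf n,\mathbf z}:U_q(\mathfrak{gl}(1|1))\to \mathrm{Cl}_N$. Moreover, the $U_q(\mathfrak{gl}(1|1))$-module obtained by pulling back the $\mathrm{Cl}_N$-module $U_N$ along $\Phi_{\mathbf n,\mathbf z}$ is isomorphic to the tensor product representation $V_{z_1,n_1}\otimes\cdots\otimes V_{z_N,n_N}$.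
   Context: All algebras are over $\mathbb{C}$ and are superalgebras (i.e. $\mathbb{Z}/2$-graded). $U_q(\mathfrak{gl}(1|1))$ denotes the superalgebra generated by odd elements $X,Y$ and even elements $G$, $t$, $t^{-1}$ subject to the relations $tt^{-1}=t^{-1}t=1$, $XY+YX=t^2-t^{-2}$, $X^2=Y^2=0$, $GX-XG=X$, $GY-YG=-Y$, and $t$ commutes with $X,Y,G$. It is a Hopf superalgebra with coproduct $\Delta X=X\otimes t+t^{-1}\otimes X$, $\Delta Y=Y\otimes t+t^{-1}\otimes Y$, $\Delta t=t\otimes t$, $\Delta G=G\otimes 1+1\otimes G$; tensor products of modules are formed via $\Delta$ using the Koszul sign rule $(a\otimes b)(x\otimes y)=(-1)^{|b||x|}ax\otimes by$. For $z\in\mathbb{C}^*$, $n\in\mathbb{C}$, $V_{z,n}$ is the $2$-dimensional module with basis $v$ (even), $u$ (odd) such that $Xv=u$, $Yv=0$, $Gv=nv$, $tv=zv$, $Xu=0$, $Gu=(n+1)u$, $Yu=(z^2-z^{-2})v$, $tu=zu$. $\mathrm{Cl}_N$ is the Clifford superalgebra generated by odd elements $a_1,\dots,a_N,b_1,\dots,b_N$ with relations $a_ia_j+a_ja_i=0$, $b_ib_j+b_jb_i=0$, $a_ib_j+b_ja_i=\delta_{ij}$. $U_N$ is its irreducible $2^N$-dimensional module generated by a vector $v$ with $b_iv=0$ for all $i$; equivalently $U_N=\bigwedge^\bullet U$ with $U=\mathrm{span}(a_1,\dots,a_N)$, $a_i$ acting by left wedge multiplication and $b_i$ by the corresponding contraction,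 with parity given by degree mod 2. *)

theory Defs
  imports Complex_Main
begin

text \<open>A unital ring 'a together with a map e from C into its centre which is a
unital ring homomorphism: this is exactly a (unital, associative) C-algebra.\<close>
definition cplx_alg :: "(complex \<Rightarrow> 'a::ring_1) \<Rightarrow> bool" where
  "cplx_alg e \<longleftrightarrow> e 1 = 1 \<and> (\<forall>x y. e (x + y) = e x + e y) \<and>
     (\<forall>x y. e (x * y) = e x * e y) \<and> (\<forall>x c. e x * c = c * e x)"

definition clifford_rel :: "nat \<Rightarrow> (nat \<Rightarrow> 'a::ring_1) \<Rightarrow> (nat \<Rightarrow> 'a) \<Rightarrow> bool" where
  "clifford_rel N a b \<longleftrightarrow>
     (\<forall>i\<in>{1..N}. \<forall>j\<in>{1..N}.
        a i * a j + a j * a i = 0 \<and> b i * b j + b j * b i = 0 \<and>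
        a i * b j + b j * a i = (if i = j then 1 else 0))"

definition uq_rel :: "'a::ring_1 \<Rightarrow> 'a \<Rightarrow> 'a \<Rightarrow> 'a \<Rightarrow> 'a \<Rightarrow> bool" where
  "uq_rel X Y G T Ti \<longleftrightarrow>
     T * Ti = 1 \<and> Ti * T = 1 \<and> X * Y + Y * X = T^2 - Ti^2 \<and>
     X * X = 0 \<and> Y * Y = 0 \<and> G * X - X * G = X \<and> G * Y - Y * G = - Y \<and>
     T * X = X * T \<and> T * Y = Y * T \<and> T * G = G * T"

definition coefX :: "nat \<Rightarrow> (nat \<Rightarrow> complex) \<Rightarrow> nat \<Rightarrow> complex" where
  "coefX N z i = (\<Prod>j\<in>{1..<i}. inverse (z j)) * (\<Prod>j\<in>{i<..N}. z j)"

definition coefY :: "nat \<Rightarrow> (nat \<Rightarrow> complex) \<Rightarrow> nat \<Rightarrow> complex" where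
  "coefY N z i = (\<Prod>j\<in>{1..<i}. inverse (z j)) * (z i ^ 2 - inverse (z i) ^ 2) *
                 (\<Prod>j\<in>{i<..N}. z j)"

definition zprod :: "nat \<Rightarrow> (nat \<Rightarrow> complex) \<Rightarrow> complex" where
  "zprod N z = (\<Prod>j\<in>{1..N}. z j)"

definition PhiX :: "nat \<Rightarrow> (nat \<Rightarrow> complex) \<Rightarrow> (complex \<Rightarrow> 'a::ring_1) \<Rightarrow> (nat \<Rightarrow> 'a) \<Rightarrow> 'a" where
  "PhiX N z e a = (\<Sum>i=1..N. e (coefX N z i) * a i)"

definition PhiY :: "nat \<Rightarrow> (nat \<Rightarrow> complex) \<Rightarrow> (complex \<Rightarrow> 'a::ring_1) \<Rightarrow> (nat \<Rightarrow> 'a) \<Rightarrow> 'a" where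
  "PhiY N z e b = (\<Sum>i=1..N. e (coefY N z i) * b i)"

definition PhiG :: "nat \<Rightarrow> (nat \<Rightarrow> complex) \<Rightarrow> (complex \<Rightarrow> 'a::ring_1) \<Rightarrow> (nat \<Rightarrow> 'a) \<Rightarrow> (nat \<Rightarrow> 'a) \<Rightarrow> 'a" where
  "PhiG N n e a b = (\<Sum>i=1..N. e (n i) + a i * b i)"

definition PhiT :: "nat \<Rightarrow> (nat \<Rightarrow> complex) \<Rightarrow> (complex \<Rightarrow> 'a::ring_1) \<Rightarrow> 'a" where
  "PhiT N z e = e (zprod N z)"

definition PhiTi :: "nat \<Rightarrow> (nat \<Rightarrow> complex) \<Rightarrow> (complex \<Rightarrow> 'a::ring_1) \<Rightarrow> 'a" where
  "PhiTi N z e = e (inverse (zprod N z))"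

text \<open>Generators of U_q(gl(1|1)); a module is given by the matrices of the
generators: M g f e = coefficient of basis vector f in g.e.\<close>
datatype gen = GX | GY | GG | GT | GTi

definition idm :: "'b \<Rightarrow> 'b \<Rightarrow> complex" where
  "idm f e = (if f = e then 1 else 0)"

definition mm :: "'k set \<Rightarrow> ('b \<Rightarrow> 'k \<Rightarrow> complex) \<Rightarrow> ('k \<Rightarrow> 'c \<Rightarrow> complex) \<Rightarrow> 'b \<Rightarrow> 'c \<Rightarrow> complex" where
  "mm K A B f e = (\<Sum>k\<in>K. A f k * B k e)"

definition ksign :: "bool \<Rightarrow> complex" where
  "ksign b = (if b then -1 else 1)"

text \<open>The module V_{z,n}: basis False = v (even), True = u (odd).\<close>
definition Vact :: "complex \<Rightarrow> complex \<Rightarrow> gen \<Rightarrow> bool \<Rightarrow> bool \<Rightarrow> complex" where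
  "Vact z n g f e = (case g of
      GX \<Rightarrow> (if f = True \<and> e = False then 1 else 0)
    | GY \<Rightarrow> (if f = False \<and> e = True then z^2 - inverse z ^ 2 else 0)
    | GG \<Rightarrow> (if f = e then (if e then n + 1 else n) else 0)
    | GT \<Rightarrow> (if f = e then z else 0)
    | GTi \<Rightarrow> (if f = e then inverse z else 0))"

text \<open>Tensor product of two modules via the coproduct
  Delta X = X (x) t + t^{-1} (x) X, Delta Y = Y (x) t + t^{-1} (x) Y,
  Delta t = t (x) t (hence Delta t^{-1} = t^{-1} (x) t^{-1}), Delta G = G (x) 1 + 1 (x) G,
  with the Koszul sign (A (x) B)(x (x) y) = (-1)^{|B||x|} Ax (x) By.
  p1 is the parity of basis vectors of the first factor.\<close>
definition tens2 :: "('b1 \<Rightarrow> bool) \<Rightarrow> (gen \<Rightarrow> 'b1 \<Rightarrow> 'b1 \<Rightarrow> complex) \<Rightarrow>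
    (gen \<Rightarrow> 'b2 \<Rightarrow> 'b2 \<Rightarrow> complex) \<Rightarrow> gen \<Rightarrow> 'b1 \<times> 'b2 \<Rightarrow> 'b1 \<times> 'b2 \<Rightarrow> complex" where
  "tens2 p1 M1 M2 g f e = (case (f, e) of ((f1, f2), (e1, e2)) \<Rightarrow>
     (case g of
       GX \<Rightarrow> M1 GX f1 e1 * M2 GT f2 e2 + ksign (p1 e1) * M1 GTi f1 e1 * M2 GX f2 e2
     | GY \<Rightarrow> M1 GY f1 e1 * M2 GT f2 e2 + ksign (p1 e1) * M1 GTi f1 e1 * M2 GY f2 e2
     | GG \<Rightarrow> M1 GG f1 e1 * idm f2 e2 + idm f1 e1 * M2 GG f2 e2
     | GT \<Rightarrow> M1 GT f1 e1 * M2 GT f2 e2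
     | GTi \<Rightarrow> M1 GTi f1 e1 * M2 GTi f2 e2))"

text \<open>V_{p_1} (x) (V_{p_2} (x) ( ... (x) V_{p_N})), basis = bool lists of length N
  (True at position i means the factor u in the i-th tensor factor).\<close>
fun tens_act :: "(complex \<times> complex) list \<Rightarrow> gen \<Rightarrow> bool list \<Rightarrow> bool list \<Rightarrow> complex" where
  "tens_act [] g f e = 0"
| "tens_act [p] g f e = (case (f, e) of
      ([b1], [b2]) \<Rightarrow> Vact (fst p) (snd p) g b1 b2 | _ \<Rightarrow> 0)"
| "tens_act (p # q # qs) g f e = (case (f, e) of
      (b1 # f', b2 # e') \<Rightarrow>
         tens2 (\<lambda>b. b) (Vact (fst p) (snd p)) (tens_act (q # qs)) g (b1, f') (b2, e')
    | _ \<Rightarrow> 0)"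

definition list_par :: "bool list \<Rightarrow> bool" where
  "list_par bs = odd (length (filter (\<lambda>b. b) bs))"

text \<open>Basis e_S = a_{s_1} ... a_{s_k} v for S = {s_1 < ... < s_k} subset of {1..N}.\<close>
definition wedge_m :: "nat \<Rightarrow> nat set \<Rightarrow> nat set \<Rightarrow> complex" where
  "wedge_m i F E = (if i \<notin> E \<and> F = insert i E then (-1) ^ card {s\<in>E. s < i} else 0)"

definition contr_m :: "nat \<Rightarrow> nat set \<Rightarrow> nat set \<Rightarrow> complex" where
  "contr_m i F E = (if i \<in> E \<and> F = E - {i} then (-1) ^ card {s\<in>E. s < i} else 0)"

definition UN_basis :: "nat \<Rightarrow> nat set set" where
  "UN_basis N = Pow {1..N}"

definition UN_par :: "nat set \<Rightarrow> bool" where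
  "UN_par S = odd (card S)"

definition pull_act :: "nat \<Rightarrow> (nat \<Rightarrow> complex) \<Rightarrow> (nat \<Rightarrow> complex) \<Rightarrow> gen \<Rightarrow> nat set \<Rightarrow> nat set \<Rightarrow> complex" where
  "pull_act N z n g F E = (case g of
      GX \<Rightarrow> (\<Sum>i=1..N. coefX N z i * wedge_m i F E)
    | GY \<Rightarrow> (\<Sum>i=1..N. coefY N z i * contr_m i F E)
    | GG \<Rightarrow> (\<Sum>i=1..N. n i * idm F E + mm (UN_basis N) (wedge_m i) (contr_m i) F E)
    | GT \<Rightarrow> zprod N z * idm F E
    | GTi \<Rightarrow> inverse (zprod N z) * idm F E)"

definition module_iso :: "'b1 set \<Rightarrow> ('b1 \<Rightarrow> bool) \<Rightarrow> (gen \<Rightarrow> 'b1 \<Rightarrow> 'b1 \<Rightarrow> complex) \<Rightarrow>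
    'b2 set \<Rightarrow> ('b2 \<Rightarrow> bool) \<Rightarrow> (gen \<Rightarrow> 'b2 \<Rightarrow> 'b2 \<Rightarrow> complex) \<Rightarrow> bool" where
  "module_iso C1 p1 M1 C2 p2 M2 \<longleftrightarrow>
     (\<exists>P Q. (\<forall>f\<in>C2. \<forall>e\<in>C1. P f e \<noteq> 0 \<longrightarrow> p2 f = p1 e) \<and>
       (\<forall>f\<in>C2. \<forall>e\<in>C2. mm C1 P Q f e = idm f e) \<and>
       (\<forall>f\<in>C1. \<forall>e\<in>C1. mm C2 Q P f e = idm f e) \<and>
       (\<forall>g. \<forall>f\<in>C2. \<forall>e\<in>C1. mm C1 P (M1 g) f e = mm C2 (M2 g) P f e))"

end

theory Submission
  imports Defs
begin

text \<open>For the homomorphism, Phi(X) and Phi(Y) are linear combinations of the anticommuting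
  a_i and b_i, so they square to zero, and their anticommutator is the scalar
  \<Sum>_i coefX_i coefY_i, which telescopes to t^2 - t^{-2}. Each a_i b_i is the number
  operator of the i-th mode: it commutes with a_k, b_k for k \<noteq> i and has commutator
  a_i, -b_i with them for k = i, which gives the relations for G.

  For the module, identify the basis vector e_S of U_N with the tensor u_S that has u in
  the factors indexed by S. Splitting off the first index, U_{N+1} becomes
  V_{z_1,n_1} \<otimes> U_N for the shifted data: the ordering sign with which a_i and b_i
  (i > 1) act on e_S picks up exactly the Koszul sign of passing through the first factor,
  and the coefficients of Phi factor as z_1^{-1} times those for the shifted data. Induction
  on N then shows that in these bases the two modules have the same matrices.\<close>

section \<open>The homomorphism into the Clifford algebra\<close>

lemma cplx_alg_hom:
  assumes "cplx_alg e"
  shows cplx_alg_one: "e 1 = 1"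
    and cplx_alg_add: "e (x + y) = e x + e y"
    and cplx_alg_mult: "e (x * y) = e x * e y"
    and cplx_alg_central: "e x * c = c * e x"
  using assms unfolding cplx_alg_def by blast+

lemma cplx_alg_zero:
  assumes "cplx_alg e" shows "e 0 = 0"
  using cplx_alg_add[OF assms, of 0 0] by simp

lemma cplx_alg_minus:
  assumes "cplx_alg e" shows "e (- x) = - e x"
  using cplx_alg_add[OF assms, of x "- x"] cplx_alg_zero[OF assms] minus_unique[of "e x"] by simp

lemma cplx_alg_diff:
  assumes "cplx_alg e" shows "e (x - y) = e x - e y"
  using cplx_alg_add[OF assms, of x "- y"] cplx_alg_minus[OF assms, of y] by simp

lemma cplx_alg_power:
  assumes "cplx_alg e" shows "e (x ^ k) = e x ^ k"
  by (induction k) (simp_all add: cplx_alg_one[OF assms] cplx_alg_mult[OF assms])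

lemma cplx_alg_sum:
  assumes "cplx_alg e" shows "e (sum f A) = (\<Sum>i\<in>A. e (f i))"
  by (induction A rule: infinite_finite_induct)
    (simp_all add: cplx_alg_zero[OF assms] cplx_alg_add[OF assms])

lemma cplx_alg_scaled_mult:
  assumes "cplx_alg e" shows "(e p * u) * (e q * v) = e (p * q) * (u * v)"
  by (metis cplx_alg_central[OF assms] cplx_alg_mult[OF assms] mult.assoc)

lemma cplx_alg_double_cancel:
  fixes e :: "complex \<Rightarrow> 'a::ring_1" and s :: 'a
  assumes "cplx_alg e" and "s + s = 0" shows "s = 0"
proof -
  have "e (1/2) + e (1/2) = 1"
    using cplx_alg_add[OF assms(1), of "1/2" "1/2"] cplx_alg_one[OF assms(1)] by simp
  then have "s = e (1/2) * (s + s)" by (metis distrib_left distrib_right mult_1_left)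
  then show ?thesis using assms(2) by simp
qed

lemma sum_coefX_mult_coefY:
  fixes z :: "nat \<Rightarrow> complex"
  assumes "\<forall>i\<in>{1..N}. z i \<noteq> 0"
  shows "(\<Sum>i=1..N. coefX N z i * coefY N z i) = zprod N z ^ 2 - inverse (zprod N z) ^ 2"
proof -
  define A where "A k = (\<Prod>j\<in>{1..<k}. inverse (z j) ^ 2) * (\<Prod>j\<in>{k..N}. z j ^ 2)" for k
  have summand: "coefX N z i * coefY N z i = A i - A (Suc i)" if "i \<in> {1..N}" for i
  proof -
    define P where "P = (\<Prod>j\<in>{1..<i}. inverse (z j))"
    define Q where "Q = (\<Prod>j\<in>{Suc i..N}. z j)"
    have "{1..<Suc i} = insert i {1..<i}" "{i..N} = insert i {Suc i..N}" "{i<..N} = {Suc i..N}"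
      using that by auto
    then have "A i = P^2 * (z i ^ 2 * Q^2)" "A (Suc i) = (inverse (z i) ^ 2 * P^2) * Q^2"
      and "coefX N z i * coefY N z i = (P * Q) * (P * (z i ^ 2 - inverse (z i) ^ 2) * Q)"
      unfolding A_def P_def Q_def coefX_def coefY_def by (simp_all add: prod_power_distrib)
    then show ?thesis by (simp add: power2_eq_square algebra_simps)
  qed
  have "(\<Sum>i=1..N. coefX N z i * coefY N z i) = - (\<Sum>i=1..N. A (Suc i) - A i)"
    by (simp add: summand sum_negf[symmetric])
  also have "(\<Sum>i=1..N. A (Suc i) - A i) = A (Suc N) - A 1"
    by (rule sum_Suc_diff) simp
  also have "A 1 = zprod N z ^ 2" unfolding A_def zprod_def by (simp add: prod_power_distrib)
  also have "A (Suc N) = inverse (zprod N z) ^ 2" unfolding A_def zprod_def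
    using prod_inversef[of "\<lambda>j. z j ^ 2" "{1..N}", unfolded o_def]
    by (simp add: prod_power_distrib atLeastLessThanSuc_atLeastAtMost power_inverse)
  finally show ?thesis by simp
qed

lemma lincomb_anticommutator:
  fixes N :: nat
  assumes e: "cplx_alg e"
    and ab: "\<forall>i\<in>{1..N}. \<forall>j\<in>{1..N}. a i * b j + b j * a i = (if i = j then 1 else 0)"
  shows "(\<Sum>i=1..N. e (c i) * a i) * (\<Sum>j=1..N. e (d j) * b j)
           + (\<Sum>j=1..N. e (d j) * b j) * (\<Sum>i=1..N. e (c i) * a i)
         = e (\<Sum>i=1..N. c i * d i)"
proof -
  have "(\<Sum>i=1..N. e (c i) * a i) * (\<Sum>j=1..N. e (d j) * b j)
          + (\<Sum>j=1..N. e (d j) * b j) * (\<Sum>i=1..N. e (c i) * a i)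
        = (\<Sum>i=1..N. \<Sum>j=1..N. e (c i * d j) * (a i * b j))
          + (\<Sum>i=1..N. \<Sum>j=1..N. e (c i * d j) * (b j * a i))"
    unfolding sum_product cplx_alg_scaled_mult[OF e]
    by (subst (2) sum.swap) (simp add: mult.commute)
  also have "\<dots> = (\<Sum>i=1..N. \<Sum>j=1..N. e (c i * d j) * (a i * b j + b j * a i))"
    by (simp add: sum.distrib[symmetric] distrib_left)
  also have "\<dots> = (\<Sum>i=1..N. \<Sum>j=1..N. if i = j then e (c i * d j) else 0)"
    using ab by (intro sum.cong refl) auto
  also have "\<dots> = (\<Sum>i=1..N. e (c i * d i))"
    by simp
  finally show ?thesis by (simp only: cplx_alg_sum[OF e])
qed

lemma lincomb_square_eq_zero:
  fixes N :: nat
  assumes e: "cplx_alg e" and anti: "\<forall>i\<in>{1..N}. \<forall>j\<in>{1..N}. a i * a j + a j * a i = 0"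
  shows "(\<Sum>i=1..N. e (c i) * a i) * (\<Sum>i=1..N. e (c i) * a i) = 0" (is "?S * ?S = 0")
proof (rule cplx_alg_double_cancel[OF e])
  have expand: "?S * ?S = (\<Sum>i=1..N. \<Sum>j=1..N. e (c i * c j) * (a i * a j))"
    unfolding sum_product cplx_alg_scaled_mult[OF e] ..
  also have "\<dots> = (\<Sum>i=1..N. \<Sum>j=1..N. e (c i * c j) * (a j * a i))"
    by (subst sum.swap) (simp add: mult.commute)
  finally have "?S * ?S + ?S * ?S = (\<Sum>i=1..N. \<Sum>j=1..N. e (c i * c j) * (a i * a j))
      + (\<Sum>i=1..N. \<Sum>j=1..N. e (c i * c j) * (a j * a i))"
    by (rule arg_cong2[OF expand])
  also have "\<dots> = (\<Sum>i=1..N. \<Sum>j=1..N. e (c i * c j) * (a i * a j + a j * a i))"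
    by (simp add: sum.distrib[symmetric] distrib_left)
  also have "\<dots> = 0" using anti by simp
  finally show "?S * ?S + ?S * ?S = 0" .
qed

lemma lincomb_commutator:
  fixes N :: nat
  assumes e: "cplx_alg e"
    and pq: "\<forall>i\<in>{1..N}. \<forall>k\<in>{1..N}. p i * q k - q k * p i = (if i = k then r i else 0)"
  shows "(\<Sum>i=1..N. e (n i) + p i) * (\<Sum>k=1..N. e (c k) * q k)
           - (\<Sum>k=1..N. e (c k) * q k) * (\<Sum>i=1..N. e (n i) + p i)
         = (\<Sum>i=1..N. e (c i) * r i)"
proof -
  have summand: "(e (n i) + p i) * (e (c k) * q k) - (e (c k) * q k) * (e (n i) + p i)
      = e (c k) * (p i * q k - q k * p i)" for i k
  proof -
    have "e (n i) * (e (c k) * q k) = (e (c k) * q k) * e (n i)"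
      by (rule cplx_alg_central[OF e])
    moreover have "p i * (e (c k) * q k) = e (c k) * (p i * q k)"
      by (metis cplx_alg_central[OF e] mult.assoc)
    ultimately show ?thesis by (simp add: algebra_simps)
  qed
  have "(\<Sum>i=1..N. e (n i) + p i) * (\<Sum>k=1..N. e (c k) * q k)
          - (\<Sum>k=1..N. e (c k) * q k) * (\<Sum>i=1..N. e (n i) + p i)
        = (\<Sum>i=1..N. \<Sum>k=1..N. e (c k) * (p i * q k - q k * p i))"
    unfolding sum_product summand[symmetric]
    by (subst (2) sum.swap) (simp add: sum_subtractf)
  also have "\<dots> = (\<Sum>i=1..N. \<Sum>k=1..N. if i = k then e (c k) * r i else 0)"
    using pq by (intro sum.cong refl) auto
  also have "\<dots> = (\<Sum>i=1..N. e (c i) * r i)"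
    by simp
  finally show ?thesis .
qed

lemma clifford_number_commutator_a:
  assumes c: "clifford_rel N a b" and i: "i \<in> {1..N}" and k: "k \<in> {1..N}"
  shows "a i * b i * a k - a k * (a i * b i) = (if i = k then a i else 0)"
proof -
  have "a k * b i + b i * a k = (if k = i then 1 else 0)" "a k * a i + a i * a k = 0"
    using c i k unfolding clifford_rel_def by blast+
  then have ba: "b i * a k = (if k = i then 1 else 0) - a k * b i"
    and aa: "a i * a k = - (a k * a i)"
    by (metis add_diff_cancel_left', metis minus_unique)
  have "a i * b i * a k = a i * (b i * a k)" by (simp add: mult.assoc)
  also have "\<dots> = (if k = i then a i else 0) - (a i * a k) * b i"
    unfolding ba by (simp add: right_diff_distrib mult.assoc)
  also have "\<dots> = (if k = i then a i else 0) + a k * (a i * b i)"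
    unfolding aa by (simp add: mult.assoc)
  finally show ?thesis by auto
qed

lemma clifford_number_commutator_b:
  assumes c: "clifford_rel N a b" and i: "i \<in> {1..N}" and k: "k \<in> {1..N}"
  shows "a i * b i * b k - b k * (a i * b i) = (if i = k then - b i else 0)"
proof -
  have "a i * b k + b k * a i = (if i = k then 1 else 0)" "b i * b k + b k * b i = 0"
    using c i k unfolding clifford_rel_def by blast+
  then have ba: "b k * a i = (if i = k then 1 else 0) - a i * b k"
    and bb: "b k * b i = - (b i * b k)"
    by (metis add_diff_cancel_left', metis minus_unique)
  have "b k * (a i * b i) = (b k * a i) * b i" by (simp add: mult.assoc)
  also have "\<dots> = (if i = k then b i else 0) - a i * (b k * b i)"
    unfolding ba by (simp add: left_diff_distrib mult.assoc)
  also have "\<dots> = (if i = k then b i else 0) + a i * b i * b k"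
    unfolding bb by (simp add: mult.assoc)
  finally show ?thesis by auto
qed

theorem uq_rel_Phi:
  assumes e: "cplx_alg e" and c: "clifford_rel N a b" and z: "\<forall>i\<in>{1..N}. z i \<noteq> 0"
  shows "uq_rel (PhiX N z e a) (PhiY N z e b) (PhiG N n e a b) (PhiT N z e) (PhiTi N z e)"
proof -
  have aa: "\<forall>i\<in>{1..N}. \<forall>j\<in>{1..N}. a i * a j + a j * a i = 0"
    and bb: "\<forall>i\<in>{1..N}. \<forall>j\<in>{1..N}. b i * b j + b j * b i = 0"
    and ab: "\<forall>i\<in>{1..N}. \<forall>j\<in>{1..N}. a i * b j + b j * a i = (if i = j then 1 else 0)"
    using c unfolding clifford_rel_def by blast+
  have "zprod N z \<noteq> 0" unfolding zprod_def using z by simp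
  then have T_inverse: "PhiT N z e * PhiTi N z e = 1" "PhiTi N z e * PhiT N z e = 1"
    unfolding PhiT_def PhiTi_def
    by (simp_all add: cplx_alg_mult[OF e, symmetric] cplx_alg_one[OF e])
  have XY: "PhiX N z e a * PhiY N z e b + PhiY N z e b * PhiX N z e a
      = PhiT N z e ^ 2 - PhiTi N z e ^ 2"
    unfolding PhiX_def PhiY_def lincomb_anticommutator[OF e ab]
      sum_coefX_mult_coefY[OF z] PhiT_def PhiTi_def
    by (simp add: cplx_alg_diff[OF e] cplx_alg_power[OF e])
  have XX: "PhiX N z e a * PhiX N z e a = 0" and YY: "PhiY N z e b * PhiY N z e b = 0"
    unfolding PhiX_def PhiY_def
    by (rule lincomb_square_eq_zero[OF e aa], rule lincomb_square_eq_zero[OF e bb])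
  have GX: "PhiG N n e a b * PhiX N z e a - PhiX N z e a * PhiG N n e a b = PhiX N z e a"
    unfolding PhiG_def PhiX_def
    by (rule lincomb_commutator[OF e]) (use clifford_number_commutator_a[OF c] in blast)
  have "PhiG N n e a b * PhiY N z e b - PhiY N z e b * PhiG N n e a b
      = (\<Sum>i=1..N. e (coefY N z i) * (- b i))"
    unfolding PhiG_def PhiY_def
    by (rule lincomb_commutator[OF e]) (use clifford_number_commutator_b[OF c] in blast)
  then have GY: "PhiG N n e a b * PhiY N z e b - PhiY N z e b * PhiG N n e a b = - PhiY N z e b"
    unfolding PhiY_def by (simp add: sum_negf)
  show ?thesis
    unfolding uq_rel_def using T_inverse XY XX YY GX GY cplx_alg_central[OF e]
    unfolding PhiT_def by metis
qed

section \<open>The pull-back of U_N as a tensor product\<close>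

lemma mm_idm_left: "finite C \<Longrightarrow> f \<in> C \<Longrightarrow> mm C idm A f e = A f e"
  unfolding mm_def idm_def by (simp add: if_distrib [of "\<lambda>x. x * _"] cong: if_cong)

lemma mm_idm_right: "finite C \<Longrightarrow> e \<in> C \<Longrightarrow> mm C A idm f e = A f e"
  unfolding mm_def idm_def by (simp add: if_distrib [of "\<lambda>x. _ * x"] cong: if_cong)

lemma module_iso_of_bij_betw:
  assumes h: "bij_betw h C2 C1" and fin: "finite C2"
    and par: "\<And>f. f \<in> C2 \<Longrightarrow> p1 (h f) = p2 f"
    and act: "\<And>g f f'. f \<in> C2 \<Longrightarrow> f' \<in> C2 \<Longrightarrow> M2 g f f' = M1 g (h f) (h f')"
  shows "module_iso C1 p1 M1 C2 p2 M2"
proof -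
  define P where "P f E = idm (h f) E" for f E
  define Q where "Q E f = idm E (h f)" for f E
  have fin1: "finite C1" using h fin bij_betw_finite by blast
  have hC: "h f \<in> C1" if "f \<in> C2" for f using h that by (auto dest: bij_betwE)
  have P_left: "mm C1 P A f E = A (h f) E" if "f \<in> C2" for A :: "_ \<Rightarrow> _ \<Rightarrow> complex" and f E
    using mm_idm_left[OF fin1 hC[OF that]] unfolding mm_def P_def .
  have P_right: "mm C2 B P f E = B f (inv_into C2 h E)"
    if "E \<in> C1" for B :: "_ \<Rightarrow> _ \<Rightarrow> complex" and f E
  proof -
    have "mm C2 B P f E = mm C1 (\<lambda>f E'. B f (inv_into C2 h E')) idm f E"
      unfolding mm_def P_def
      using sum.reindex_bij_betw[OF h, of "\<lambda>E'. B f (inv_into C2 h E') * idm E' E"]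
        bij_betw_inv_into_left[OF h] by (simp cong: sum.cong)
    then show ?thesis using mm_idm_right[OF fin1 that] by simp
  qed
  have "\<forall>f\<in>C2. \<forall>e\<in>C2. mm C1 P Q f e = idm f e"
    using P_left[of _ Q] bij_betw_imp_inj_on[OF h] unfolding Q_def idm_def by (auto dest: inj_onD)
  moreover have "\<forall>F\<in>C1. \<forall>E\<in>C1. mm C2 Q P F E = idm F E"
    using P_right[of _ Q] bij_betw_inv_into_right[OF h] unfolding Q_def idm_def by auto
  moreover have "mm C1 P (M1 g) f E = mm C2 (M2 g) P f E" if "f \<in> C2" "E \<in> C1" for g f E
  proof -
    have "inv_into C2 h E \<in> C2" using bij_betw_inv_into[OF h] that(2) by (auto dest: bij_betwE)
    then show ?thesis
      using P_left[OF that(1), of "M1 g"] P_right[OF that(2), of "M2 g"] act[OF that(1)]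
        bij_betw_inv_into_right[OF h that(2)]
      by simp
  qed
  moreover have "\<forall>f\<in>C2. \<forall>E\<in>C1. P f E \<noteq> 0 \<longrightarrow> p2 f = p1 E"
    using par unfolding P_def idm_def by auto
  ultimately show ?thesis unfolding module_iso_def by blast
qed

text \<open>A basis vector of the tensor product, a bit list, corresponds to the basis vector
  e_S of U_N, where S is the set of (1-based) positions of the factors u.\<close>
definition true_positions :: "bool list \<Rightarrow> nat set" where
  "true_positions bs = {i. 0 < i \<and> i \<le> length bs \<and> bs ! (i - 1)}"

definition bit_cons :: "bool \<Rightarrow> nat set \<Rightarrow> nat set" where
  "bit_cons c E = (if c then insert 1 (Suc ` E) else Suc ` E)"

lemma true_positions_Nil [simp]: "true_positions [] = {}"
  unfolding true_positions_def by auto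

lemma true_positions_Cons: "true_positions (b # bs) = bit_cons b (true_positions bs)"
proof (rule set_eqI)
  fix x
  show "x \<in> true_positions (b # bs) \<longleftrightarrow> x \<in> bit_cons b (true_positions bs)"
  proof (cases x)
    case (Suc k)
    then show ?thesis by (cases k) (auto simp: true_positions_def bit_cons_def)
  qed (simp add: true_positions_def bit_cons_def)
qed

lemma true_positions_subset: "true_positions bs \<subseteq> {1..length bs}"
  unfolding true_positions_def by auto

lemma bij_betw_true_positions: "bij_betw true_positions {bs. length bs = N} (Pow {1..N})"
proof (rule bij_betw_byWitness[where f' = "\<lambda>E. map (\<lambda>i. Suc i \<in> E) [0..<N]"])
  show "\<forall>bs\<in>{bs. length bs = N}. map (\<lambda>i. Suc i \<in> true_positions bs) [0..<N] = bs"
    by (auto intro!: nth_equalityI simp: true_positions_def)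
  show "\<forall>E\<in>Pow {1..N}. true_positions (map (\<lambda>i. Suc i \<in> E) [0..<N]) = E"
  proof (intro ballI set_eqI)
    fix E x assume "E \<in> Pow {1..N}"
    then show "x \<in> true_positions (map (\<lambda>i. Suc i \<in> E) [0..<N]) \<longleftrightarrow> x \<in> E"
      by (cases x) (auto simp: true_positions_def)
  qed
  show "true_positions ` {bs. length bs = N} \<subseteq> Pow {1..N}"
    using true_positions_subset by blast
  show "(\<lambda>E. map (\<lambda>i. Suc i \<in> E) [0..<N]) ` Pow {1..N} \<subseteq> {bs. length bs = N}"
    by auto
qed

lemma bit_cons_eq_iff:
  assumes "0 \<notin> F" "0 \<notin> E"
  shows "bit_cons b F = bit_cons c E \<longleftrightarrow> b = c \<and> F = E"
proof -
  have "1 \<notin> Suc ` F" "1 \<notin> Suc ` E" using assms by auto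
  then show ?thesis unfolding bit_cons_def using inj_image_eq_iff[OF inj_Suc, of F E]
    by (cases b; cases c) (simp_all add: insert_ident, blast, blast)
qed

lemma one_in_bit_cons: "0 \<notin> E \<Longrightarrow> 1 \<in> bit_cons c E \<longleftrightarrow> c"
  unfolding bit_cons_def by auto

lemma Suc_in_bit_cons: "1 \<le> j \<Longrightarrow> Suc j \<in> bit_cons c E \<longleftrightarrow> j \<in> E"
  unfolding bit_cons_def by auto

lemma insert_Suc_bit_cons: "1 \<le> j \<Longrightarrow> insert (Suc j) (bit_cons c E) = bit_cons c (insert j E)"
  unfolding bit_cons_def by auto

lemma bit_cons_Diff_Suc: "1 \<le> j \<Longrightarrow> bit_cons c E - {Suc j} = bit_cons c (E - {j})"
  unfolding bit_cons_def by auto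

lemma bit_cons_Diff_one: "0 \<notin> E \<Longrightarrow> bit_cons c E - {1} = bit_cons False E"
  unfolding bit_cons_def by auto

lemma insert_one_bit_cons: "insert 1 (bit_cons c E) = bit_cons True E"
  unfolding bit_cons_def by auto

lemma bit_cons_less_Suc: "1 \<le> j \<Longrightarrow> {s\<in>bit_cons c E. s < Suc j} = bit_cons c {s\<in>E. s < j}"
  unfolding bit_cons_def by auto

lemma bit_cons_less_one: "{s\<in>bit_cons c E. s < 1} = {}"
  unfolding bit_cons_def by auto

lemma card_bit_cons:
  assumes "finite E" "0 \<notin> E"
  shows "card (bit_cons c E) = of_bool c + card E"
proof -
  have "1 \<notin> Suc ` E" using assms by auto
  then show ?thesis unfolding bit_cons_def using assms by (simp add: card_insert_disjoint card_image)
qed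

lemma card_true_positions: "card (true_positions bs) = length (filter (\<lambda>b. b) bs)"
proof (induction bs)
  case (Cons b bs)
  have "finite (true_positions bs)" "0 \<notin> true_positions bs"
    using true_positions_subset[of bs] finite_subset by auto
  then show ?case unfolding true_positions_Cons using Cons by (simp add: card_bit_cons)
qed simp

text \<open>The sign by which a_i, i > 1, acts on U_{N+1} splits off the Koszul sign of the
  first tensor factor.\<close>
lemma sign_bit_cons:
  assumes "0 \<notin> E" "1 \<le> j"
  shows "(-1::complex) ^ card {s\<in>bit_cons c E. s < Suc j} = ksign c * (-1) ^ card {s\<in>E. s < j}"
  using assms by (simp add: bit_cons_less_Suc card_bit_cons ksign_def)

lemma wedge_m_one_bit_cons:
  assumes "0 \<notin> F" "0 \<notin> E"
  shows "wedge_m 1 (bit_cons b F) (bit_cons c E) = (if b \<and> \<not> c \<and> F = E then 1 else 0)"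
  using assms one_in_bit_cons[OF assms(2), of c] bit_cons_eq_iff[OF assms, of b True]
  unfolding wedge_m_def bit_cons_less_one insert_one_bit_cons by auto

lemma wedge_m_Suc_bit_cons:
  assumes "0 \<notin> F" "0 \<notin> E" "1 \<le> j"
  shows "wedge_m (Suc j) (bit_cons b F) (bit_cons c E) = (if b = c then ksign c * wedge_m j F E else 0)"
proof -
  have E': "0 \<notin> insert j E" using assms by auto
  show ?thesis
    unfolding wedge_m_def Suc_in_bit_cons[OF assms(3)] insert_Suc_bit_cons[OF assms(3)]
      bit_cons_eq_iff[OF assms(1) E'] sign_bit_cons[OF assms(2,3)]
    by simp
qed

lemma contr_m_one_bit_cons:
  assumes "0 \<notin> F" "0 \<notin> E"
  shows "contr_m 1 (bit_cons b F) (bit_cons c E) = (if c \<and> \<not> b \<and> F = E then 1 else 0)"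
  using assms one_in_bit_cons[OF assms(2), of c] bit_cons_eq_iff[OF assms, of b False]
  unfolding contr_m_def bit_cons_less_one bit_cons_Diff_one[OF assms(2)] by auto

lemma contr_m_Suc_bit_cons:
  assumes "0 \<notin> F" "0 \<notin> E" "1 \<le> j"
  shows "contr_m (Suc j) (bit_cons b F) (bit_cons c E) = (if b = c then ksign c * contr_m j F E else 0)"
proof -
  have E': "0 \<notin> E - {j}" using assms by auto
  show ?thesis
    unfolding contr_m_def Suc_in_bit_cons[OF assms(3)] bit_cons_Diff_Suc[OF assms(3)]
      bit_cons_eq_iff[OF assms(1) E'] sign_bit_cons[OF assms(2,3)]
    by simp
qed

lemma idm_bit_cons: "0 \<notin> F \<Longrightarrow> 0 \<notin> E \<Longrightarrow> idm (bit_cons b F) (bit_cons c E) = idm b c * idm F E"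
  unfolding idm_def by (simp add: bit_cons_eq_iff)

lemma prod_greaterThanAtMost_Suc_shift:
  "(\<Prod>i\<in>{Suc j<..Suc N}. h i) = (\<Prod>i\<in>{j<..N}. h (Suc i))"
  by (rule prod.reindex_bij_witness[where i = Suc and j = "\<lambda>i. i - 1"]) auto

lemma prod_one_lessThan_Suc_shift:
  assumes "1 \<le> j"
  shows "(\<Prod>i\<in>{1..<Suc j}. h i) = h 1 * (\<Prod>i\<in>{1..<j}. h (Suc i))"
  using assms
  by (simp add: prod.atLeast_Suc_lessThan prod.atLeast_Suc_lessThan_Suc_shift del: prod.op_ivl_Suc)

lemma zprod_Suc: "zprod (Suc N) z = z 1 * zprod N (\<lambda>i. z (Suc i))"
  unfolding zprod_def
  by (simp add: prod.atLeast_Suc_atMost prod.atLeast_Suc_atMost_Suc_shift del: prod.cl_ivl_Suc)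

lemma coefX_one: "coefX (Suc N) z 1 = zprod N (\<lambda>i. z (Suc i))"
proof -
  have "{0::nat<..N} = {1..N}" by auto
  then show ?thesis
    unfolding coefX_def zprod_def using prod_greaterThanAtMost_Suc_shift[of z 0 N] by simp
qed

lemma coefY_one: "coefY (Suc N) z 1 = (z 1 ^ 2 - inverse (z 1) ^ 2) * zprod N (\<lambda>i. z (Suc i))"
proof -
  have "{0::nat<..N} = {1..N}" by auto
  then show ?thesis
    unfolding coefY_def zprod_def using prod_greaterThanAtMost_Suc_shift[of z 0 N] by simp
qed

lemma coefX_Suc:
  "1 \<le> j \<Longrightarrow> coefX (Suc N) z (Suc j) = inverse (z 1) * coefX N (\<lambda>i. z (Suc i)) j"
  unfolding coefX_def
  by (simp only: prod_one_lessThan_Suc_shift prod_greaterThanAtMost_Suc_shift mult.assoc)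

lemma coefY_Suc:
  "1 \<le> j \<Longrightarrow> coefY (Suc N) z (Suc j) = inverse (z 1) * coefY N (\<lambda>i. z (Suc i)) j"
  unfolding coefY_def
  by (simp only: prod_one_lessThan_Suc_shift prod_greaterThanAtMost_Suc_shift mult.assoc)

lemma sum_atLeast1_atMost_Suc: "(\<Sum>i=1..Suc N. h i) = h 1 + (\<Sum>j=1..N. h (Suc j))"
  by (simp add: sum.atLeast_Suc_atMost sum.atLeast_Suc_atMost_Suc_shift del: sum.cl_ivl_Suc)

lemma mm_wedge_contr:
  assumes "E \<subseteq> {1..N}" "i \<in> {1..N}"
  shows "mm (UN_basis N) (wedge_m i) (contr_m i) F E = idm F E * of_bool (i \<in> E)"
proof -
  have "mm (UN_basis N) (wedge_m i) (contr_m i) F E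
      = (\<Sum>K\<in>Pow {1..N}. if K = E - {i} then wedge_m i F K * contr_m i K E else 0)"
    unfolding mm_def UN_basis_def by (intro sum.cong refl) (auto simp: contr_m_def)
  also have "\<dots> = wedge_m i F (E - {i}) * contr_m i (E - {i}) E"
    using assms by (subst sum.delta) auto
  also have "\<dots> = idm F E * of_bool (i \<in> E)"
  proof (cases "i \<in> E")
    case True
    then have "{s \<in> E - {i}. s < i} = {s \<in> E. s < i}" "insert i (E - {i}) = E" by auto
    with True show ?thesis unfolding wedge_m_def contr_m_def idm_def
      by (simp add: power_mult_distrib[symmetric])
  qed (simp add: contr_m_def)
  finally show ?thesis .
qed

lemma pull_act_GG:
  assumes "E \<subseteq> {1..N}"
  shows "pull_act N z n GG F E = idm F E * (\<Sum>i=1..N. n i + of_bool (i \<in> E))"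
  unfolding pull_act_def using mm_wedge_contr[OF assms]
  by (simp add: sum_distrib_left algebra_simps)

lemma pull_act_GX_bit_cons:
  assumes "0 \<notin> F" "0 \<notin> E"
  shows "pull_act (Suc N) z n GX (bit_cons b F) (bit_cons c E)
    = (if b \<and> \<not> c \<and> F = E then zprod N (\<lambda>i. z (Suc i)) else 0)
      + (if b = c then ksign c * inverse (z 1) * pull_act N (\<lambda>i. z (Suc i)) (\<lambda>i. n (Suc i)) GX F E else 0)"
proof -
  have "(\<Sum>j=1..N. coefX (Suc N) z (Suc j) * wedge_m (Suc j) (bit_cons b F) (bit_cons c E))
      = (if b = c then ksign c * inverse (z 1) else 0) * (\<Sum>j=1..N. coefX N (\<lambda>i. z (Suc i)) j * wedge_m j F E)"
    unfolding sum_distrib_left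
    by (intro sum.cong refl) (simp add: coefX_Suc wedge_m_Suc_bit_cons assms)
  then show ?thesis
    unfolding pull_act_def gen.case sum_atLeast1_atMost_Suc coefX_one wedge_m_one_bit_cons[OF assms]
    by simp
qed

lemma pull_act_GY_bit_cons:
  assumes "0 \<notin> F" "0 \<notin> E"
  shows "pull_act (Suc N) z n GY (bit_cons b F) (bit_cons c E)
    = (if c \<and> \<not> b \<and> F = E then (z 1 ^ 2 - inverse (z 1) ^ 2) * zprod N (\<lambda>i. z (Suc i)) else 0)
      + (if b = c then ksign c * inverse (z 1) * pull_act N (\<lambda>i. z (Suc i)) (\<lambda>i. n (Suc i)) GY F E else 0)"
proof -
  have "(\<Sum>j=1..N. coefY (Suc N) z (Suc j) * contr_m (Suc j) (bit_cons b F) (bit_cons c E))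
      = (if b = c then ksign c * inverse (z 1) else 0) * (\<Sum>j=1..N. coefY N (\<lambda>i. z (Suc i)) j * contr_m j F E)"
    unfolding sum_distrib_left
    by (intro sum.cong refl) (simp add: coefY_Suc contr_m_Suc_bit_cons assms)
  then show ?thesis
    unfolding pull_act_def gen.case sum_atLeast1_atMost_Suc coefY_one contr_m_one_bit_cons[OF assms]
    by simp
qed

lemma pull_act_GG_bit_cons:
  assumes "F \<subseteq> {1..N}" "E \<subseteq> {1..N}"
  shows "pull_act (Suc N) z n GG (bit_cons b F) (bit_cons c E)
    = idm b c * (idm F E * (n 1 + of_bool c) + pull_act N (\<lambda>i. z (Suc i)) (\<lambda>i. n (Suc i)) GG F E)"
proof -
  have E: "0 \<notin> E" and F: "0 \<notin> F" and "bit_cons c E \<subseteq> {1..Suc N}"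
    using assms by (auto simp: bit_cons_def)
  then show ?thesis
    unfolding pull_act_GG[OF \<open>bit_cons c E \<subseteq> {1..Suc N}\<close>] pull_act_GG[OF assms(2)]
      sum_atLeast1_atMost_Suc idm_bit_cons[OF F E] one_in_bit_cons[OF E]
    by (simp add: Suc_in_bit_cons algebra_simps)
qed

lemma pull_act_bit_cons:
  assumes F: "F \<subseteq> {1..N}" and E: "E \<subseteq> {1..N}"
  shows "pull_act (Suc N) z n g (bit_cons b F) (bit_cons c E)
    = tens2 (\<lambda>b. b) (Vact (z 1) (n 1)) (pull_act N (\<lambda>i. z (Suc i)) (\<lambda>i. n (Suc i))) g (b, F) (c, E)"
proof -
  have F0: "0 \<notin> F" and E0: "0 \<notin> E" using F E by auto
  show ?thesis
  proof (cases g)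
    case GX
    then show ?thesis unfolding GX pull_act_GX_bit_cons[OF F0 E0]
      by (cases b; cases c) (simp_all add: tens2_def Vact_def idm_def ksign_def pull_act_def)
  next
    case GY
    then show ?thesis unfolding GY pull_act_GY_bit_cons[OF F0 E0]
      by (cases b; cases c) (simp_all add: tens2_def Vact_def idm_def ksign_def pull_act_def)
  next
    case GG
    then show ?thesis unfolding GG pull_act_GG_bit_cons[OF F E]
      by (cases b; cases c) (simp_all add: tens2_def Vact_def idm_def algebra_simps)
  qed (simp_all add: tens2_def pull_act_def zprod_Suc idm_bit_cons F0 E0 Vact_def,
       simp_all add: idm_def)
qed

lemma idm_true_positions:
  "length f = length e \<Longrightarrow> idm (true_positions f) (true_positions e) = idm f e"
  using bij_betw_imp_inj_on[OF bij_betw_true_positions] unfolding idm_def by (auto dest: inj_onD)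

lemma tens2_cong_right:
  assumes "\<And>g. M2 g x y = M2' g x' y'" and "idm x y = idm x' y'"
  shows "tens2 p1 M1 M2 g (b, x) (c, y) = tens2 p1 M1 M2' g (b, x') (c, y')"
  unfolding tens2_def using assms by (cases g) simp_all

lemma tens2_pull_act_zero:
  "tens2 (\<lambda>b. b) (Vact w m) (pull_act 0 z n) g (b, {}) (c, {}) = Vact w m g b c"
  by (cases g) (simp_all add: tens2_def pull_act_def zprod_def idm_def)

lemma map_upt_Suc_shift: "map h [1..<Suc N + 1] = h 1 # map (\<lambda>i. h (Suc i)) [1..<N + 1]"
  by (simp add: upt_conv_Cons map_Suc_upt[symmetric] del: upt_Suc)

lemma tens_act_eq_pull_act:
  assumes "1 \<le> N" "length f = N" "length e = N"
  shows "tens_act (map (\<lambda>i. (z i, n i)) [1..<N+1]) g f e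
    = pull_act N z n g (true_positions f) (true_positions e)"
  using assms
proof (induction N arbitrary: z n f e g)
  case (Suc N)
  obtain b f' where f: "f = b # f'" and lf: "length f' = N" using Suc.prems by (cases f) auto
  obtain c e' where e: "e = c # e'" and le: "length e' = N" using Suc.prems by (cases e) auto
  have pull_act_Suc: "pull_act (Suc N) z n g (true_positions f) (true_positions e)
      = tens2 (\<lambda>b. b) (Vact (z 1) (n 1)) (pull_act N (\<lambda>i. z (Suc i)) (\<lambda>i. n (Suc i))) g
          (b, true_positions f') (c, true_positions e')"
    unfolding f e true_positions_Cons
    using pull_act_bit_cons true_positions_subset lf le by metis
  show ?case
  proof (cases N)
    case 0
    then show ?thesis using lf le unfolding pull_act_Suc by (simp add: f e tens2_pull_act_zero)
  next
    case (Suc M)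
    then obtain q qs where qs: "map (\<lambda>i. (z (Suc i), n (Suc i))) [1..<N + 1] = q # qs"
      by (simp add: upt_conv_Cons del: upt_Suc)
    have "tens_act (map (\<lambda>i. (z i, n i)) [1..<Suc N + 1]) g f e
        = tens2 (\<lambda>b. b) (Vact (z 1) (n 1)) (tens_act (q # qs)) g (b, f') (c, e')"
      unfolding map_upt_Suc_shift qs f e by simp
    also have "\<dots> = tens2 (\<lambda>b. b) (Vact (z 1) (n 1)) (pull_act N (\<lambda>i. z (Suc i)) (\<lambda>i. n (Suc i))) g
          (b, true_positions f') (c, true_positions e')"
      using Suc.IH[of f' e' "\<lambda>i. z (Suc i)" "\<lambda>i. n (Suc i)"] lf le Suc qs
      by (intro tens2_cong_right) (simp_all add: idm_true_positions)
    finally show ?thesis unfolding pull_act_Suc .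
  qed
qed simp

theorem module_iso_pull_act_tens_act:
  assumes "1 \<le> N"
  shows "module_iso (UN_basis N) UN_par (pull_act N z n)
           {bs. length bs = N} list_par (tens_act (map (\<lambda>i. (z i, n i)) [1..<N+1]))"
proof (rule module_iso_of_bij_betw)
  show "bij_betw true_positions {bs. length bs = N} (UN_basis N)"
    unfolding UN_basis_def by (rule bij_betw_true_positions)
  show "finite {bs :: bool list. length bs = N}"
    using finite_lists_length_eq[of "UNIV :: bool set" N] by simp
  show "UN_par (true_positions f) = list_par f" for f
    unfolding UN_par_def list_par_def card_true_positions ..
  show "tens_act (map (\<lambda>i. (z i, n i)) [1..<N+1]) g f f'
      = pull_act N z n g (true_positions f) (true_positions f')"
    if "f \<in> {bs. length bs = N}" "f' \<in> {bs. length bs = N}" for g f f'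
    using tens_act_eq_pull_act[OF assms] that by simp
qed

theorem mainTheorem1:
  fixes N :: nat and z n :: "nat \<Rightarrow> complex"
  assumes "N \<ge> 1" and "\<forall>i\<in>{1..N}. z i \<noteq> 0"
  shows "(\<forall>(e :: complex \<Rightarrow> 'a::ring_1) (a :: nat \<Rightarrow> 'a) b.
            cplx_alg e \<and> clifford_rel N a b \<longrightarrow>
            uq_rel (PhiX N z e a) (PhiY N z e b) (PhiG N n e a b) (PhiT N z e) (PhiTi N z e))
       \<and> module_iso (UN_basis N) UN_par (pull_act N z n)
           {bs. length bs = N} list_par (tens_act (map (\<lambda>i. (z i, n i)) [1..<N+1]))"
  using uq_rel_Phi[OF _ _ assms(2)] module_iso_pull_act_tens_act[OF assms(1)] by blast

end
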